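(* Let $k$ be an infinite field, $d>0$, $a\geq 7$ integers with $\gcd(a,d)=1$, and $R=k[[t^a,t^{2a+d},t^{3a+3d},t^{4a+6d}]]$ with maximal ideal $\mathfrak{m}$. The Hilbert series of the tangent cone $G_{\mathfrak{m}}$, $\sum_{n\geq0}\dim_k(\mathfrak{m}^n/\mathfrak{m}^{n+1})x^n$, equals $$\frac{\sum_{k=0}^{\lfloor a/6\rfloor+2}t_kx^k}{1-x},\qquad t_k=\#\{i\mid 0\leq i\leq a-1,\ \mu_i+\nu_i+\xi_i=k\}.$$
   Context: For $1\leq i\leq a-1$ write $i=6\mu_i+q_i$ with $0\leq q_i<6$, set $(\nu_i,\xi_i)=(1,q_i-3)$ if $q_i\geq3$ and $(\nu_i,\xi_i)=(0,q_i)$ if $q_i<3$; set $(\mu_0,\nu_0,\xi_0)=(0,0,0)$. *)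

theory Defs
  imports "HOL-Computational_Algebra.Formal_Power_Series"
begin

definition num_semigroup :: "nat list \<Rightarrow> nat set" where
  "num_semigroup gs = {n. \<exists>c::nat \<Rightarrow> nat. n = (\<Sum>j<length gs. c j * gs ! j)}"

(* the complete semigroup ring k[[t^s : s in S]] as a subring of k[[t]] *)
definition sg_ring :: "nat set \<Rightarrow> 'k::field fps set" where
  "sg_ring S = {f. \<forall>n. fps_nth f n \<noteq> 0 \<longrightarrow> n \<in> S}"

definition sg_max_ideal :: "nat set \<Rightarrow> 'k::field fps set" where
  "sg_max_ideal S = {f \<in> sg_ring S. fps_nth f 0 = 0}"

definition ideal_prod :: "'k::field fps set \<Rightarrow> 'k fps set \<Rightarrow> 'k fps set" where
  "ideal_prod I J = {g. \<exists>r (x::nat \<Rightarrow> 'k fps) y. (\<forall>i<r. x i \<in> I \<and> y i \<in> J) \<and>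
                          g = (\<Sum>i<r. x i * y i)}"

fun max_ideal_pow :: "nat set \<Rightarrow> nat \<Rightarrow> 'k::field fps set" where
  "max_ideal_pow S 0 = sg_ring S"
| "max_ideal_pow S (Suc n) = ideal_prod (sg_max_ideal S) (max_ideal_pow S n)"

(* dim_k (A / B) = r  (A, B k-subspaces, B subset A), k acting by fps_const *)
definition quot_dim :: "'k::field fps set \<Rightarrow> 'k fps set \<Rightarrow> nat \<Rightarrow> bool" where
  "quot_dim A B r \<longleftrightarrow> (\<exists>f :: nat \<Rightarrow> 'k fps.
      (\<forall>i<r. f i \<in> A) \<and>
      (\<forall>c :: nat \<Rightarrow> 'k. (\<Sum>i<r. fps_const (c i) * f i) \<in> B \<longrightarrow> (\<forall>i<r. c i = 0)) \<and>
      (\<forall>g\<in>A. \<exists>c :: nat \<Rightarrow> 'k. g - (\<Sum>i<r. fps_const (c i) * f i) \<in> B))"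

definition mu_i :: "nat \<Rightarrow> nat" where "mu_i i = i div 6"
definition nu_i :: "nat \<Rightarrow> nat" where "nu_i i = (if i mod 6 \<ge> 3 then 1 else 0)"
definition xi_i :: "nat \<Rightarrow> nat" where
  "xi_i i = (if i mod 6 \<ge> 3 then i mod 6 - 3 else i mod 6)"

definition t_coeff :: "nat \<Rightarrow> nat \<Rightarrow> nat" where
  "t_coeff a k = card {i. i \<le> a - 1 \<and> mu_i i + nu_i i + xi_i i = k}"

end

theory Submission
  imports Defs
begin

(*
  All powers of the maximal ideal are monomial: m^n consists of the series supported on the set
  S_n of semigroup elements that are sums of at least n generators, so dim m^n/m^(n+1) is the
  number of elements of S_n - S_(n+1).

  An element c0 a + c1 (2a+d) + c2 (3a+3d) + c3 (4a+6d) equals P a + j d with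
  j = c1 + 3 c2 + 6 c3. Moving multiples of a d into the coefficient of a and then replacing
  (c1, c2, c3) by the greedy decomposition j = 6 mu + 3 nu + xi lowers the coefficient of a without
  lowering the number of generators used. As gcd(a, d) = 1, every element thus has a unique normal
  form (w_i + q) a + i d with i < a, where w_i = 4 mu_i + 3 nu_i + 2 xi_i, and it lies in S_n exactly
  when n <= q + mu_i + nu_i + xi_i. So S_n - S_(n+1) has one element for each i < a with
  mu_i + nu_i + xi_i <= n, and its size is t_0 + ... + t_n.
*)

unbundle fps_syntax

section \<open>Semigroup rings of numerical semigroups\<close>

definition sg_level :: "nat list \<Rightarrow> nat \<Rightarrow> nat set" where
  "sg_level gs n =
     {s. \<exists>c::nat \<Rightarrow> nat. s = (\<Sum>j<length gs. c j * gs ! j) \<and> n \<le> (\<Sum>j<length gs. c j)}"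

definition supported_on :: "nat set \<Rightarrow> 'k::field fps set" where
  "supported_on T = {f. \<forall>s. f $ s \<noteq> 0 \<longrightarrow> s \<in> T}"

lemma sg_level_0: "sg_level gs 0 = num_semigroup gs"
  unfolding sg_level_def num_semigroup_def by simp

lemma sg_level_antimono: "m \<le> n \<Longrightarrow> sg_level gs n \<subseteq> sg_level gs m"
  unfolding sg_level_def by force

lemma sg_level_add:
  assumes "u \<in> sg_level gs m" "v \<in> sg_level gs n"
  shows "u + v \<in> sg_level gs (m + n)"
proof -
  obtain c where c: "u = (\<Sum>j<length gs. c j * gs ! j)" "m \<le> (\<Sum>j<length gs. c j)"
    using assms(1) unfolding sg_level_def by blast
  obtain c' where c': "v = (\<Sum>j<length gs. c' j * gs ! j)" "n \<le> (\<Sum>j<length gs. c' j)"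
    using assms(2) unfolding sg_level_def by blast
  have "u + v = (\<Sum>j<length gs. (c j + c' j) * gs ! j)"
    unfolding c c' by (simp add: sum.distrib distrib_right)
  moreover have "m + n \<le> (\<Sum>j<length gs. c j + c' j)"
    using c c' by (simp add: sum.distrib)
  ultimately show ?thesis
    unfolding sg_level_def by (intro CollectI exI[of _ "\<lambda>j. c j + c' j"]) simp
qed

lemma sg_level_1:
  assumes "u \<in> num_semigroup gs" "u \<noteq> 0"
  shows "u \<in> sg_level gs 1"
proof -
  obtain c where c: "u = (\<Sum>j<length gs. c j * gs ! j)"
    using assms(1) unfolding num_semigroup_def by blast
  have "1 \<le> (\<Sum>j<length gs. c j)"
  proof (rule ccontr)
    assume "\<not> 1 \<le> (\<Sum>j<length gs. c j)"
    then have "(\<Sum>j<length gs. c j) = 0"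
      by linarith
    then have "\<forall>j<length gs. c j = 0"
      by simp
    then show False
      using assms(2) unfolding c by simp
  qed
  then show ?thesis
    using c unfolding sg_level_def by (intro CollectI exI[of _ c]) simp
qed

lemma sg_level_Suc_remove_generator:
  assumes "s \<in> sg_level gs (Suc n)"
  shows "\<exists>j<length gs. gs ! j \<le> s \<and> s - gs ! j \<in> sg_level gs n"
proof -
  obtain c where c: "s = (\<Sum>i<length gs. c i * gs ! i)" "Suc n \<le> (\<Sum>i<length gs. c i)"
    using assms unfolding sg_level_def by blast
  then obtain j where j: "j < length gs" "c j \<noteq> 0"
    by (metis not_less_eq_eq sum.neutral zero_le lessThan_iff)
  define c' where "c' = c(j := c j - 1)"
  have c_eq: "c = (\<lambda>i. c' i + of_bool (i = j))"
    using j(2) by (auto simp: c'_def)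
  have "s = (\<Sum>i<length gs. c' i * gs ! i) + gs ! j"
    unfolding c(1) c_eq using j(1) by (simp add: distrib_right sum.distrib)
  moreover have "n \<le> (\<Sum>i<length gs. c' i)"
    using c(2) j(1) unfolding c_eq by (simp add: sum.distrib)
  ultimately have "gs ! j \<le> s \<and> s - gs ! j \<in> sg_level gs n"
    unfolding sg_level_def by (auto intro!: exI[of _ c'])
  with j(1) show ?thesis
    by blast
qed

lemma generator_in_num_semigroup: "j < length gs \<Longrightarrow> gs ! j \<in> num_semigroup gs"
  unfolding num_semigroup_def
  by (intro CollectI exI[of _ "\<lambda>i. of_bool (i = j)"]) simp

lemma supported_on_mono: "A \<subseteq> B \<Longrightarrow> supported_on A \<subseteq> supported_on B"
  unfolding supported_on_def by blast

lemma sum_supported_on: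
  assumes "\<And>i. i < r \<Longrightarrow> x i \<in> supported_on T"
  shows "(\<Sum>i<r. x i) \<in> supported_on T"
  unfolding supported_on_def
proof (intro CollectI allI impI)
  fix s assume "(\<Sum>i<r. x i) $ s \<noteq> 0"
  then have "(\<Sum>i<r. x i $ s) \<noteq> 0"
    by (simp add: fps_sum_nth)
  then obtain i where "i < r" "x i $ s \<noteq> 0"
    using sum.not_neutral_contains_not_neutral by blast
  then show "s \<in> T"
    using assms unfolding supported_on_def by auto
qed

lemma mult_supported_on:
  assumes "f \<in> supported_on A" "g \<in> supported_on B"
  shows "f * g \<in> supported_on {u + v |u v. u \<in> A \<and> v \<in> B}"
  unfolding supported_on_def
proof (rule CollectI, intro allI impI)
  fix s assume "(f * g) $ s \<noteq> 0"
  then have "(\<Sum>u=0..s. f $ u * g $ (s - u)) \<noteq> 0"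
    by (simp add: fps_mult_nth)
  then obtain u where "u \<in> {0..s}" "f $ u * g $ (s - u) \<noteq> 0"
    using sum.not_neutral_contains_not_neutral by blast
  then have "u \<in> A" "s - u \<in> B" "s = u + (s - u)"
    using assms unfolding supported_on_def by auto
  then show "s \<in> {u + v |u v. u \<in> A \<and> v \<in> B}"
    by blast
qed

lemma sg_max_ideal_subset_level_1:
  "sg_max_ideal (num_semigroup gs) \<subseteq> (supported_on (sg_level gs 1) :: 'k::field fps set)"
proof
  fix f :: "'k fps"
  assume f: "f \<in> sg_max_ideal (num_semigroup gs)"
  have "s \<in> sg_level gs 1" if "f $ s \<noteq> 0" for s
  proof (rule sg_level_1)
    show "s \<in> num_semigroup gs"
      using f that unfolding sg_max_ideal_def sg_ring_def by auto
    show "s \<noteq> 0"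
      using f that unfolding sg_max_ideal_def by (cases "s = 0") auto
  qed
  then show "f \<in> supported_on (sg_level gs 1)"
    unfolding supported_on_def by blast
qed

lemma ideal_prod_level_subset_level_Suc:
  "ideal_prod (sg_max_ideal (num_semigroup gs)) (supported_on (sg_level gs n))
     \<subseteq> (supported_on (sg_level gs (Suc n)) :: 'k::field fps set)"
proof
  fix g :: "'k fps"
  assume "g \<in> ideal_prod (sg_max_ideal (num_semigroup gs)) (supported_on (sg_level gs n))"
  then obtain r and x y :: "nat \<Rightarrow> 'k fps" where xy: "\<forall>i<r. x i \<in> sg_max_ideal (num_semigroup gs) \<and>
                                     y i \<in> supported_on (sg_level gs n)"
    and g: "g = (\<Sum>i<r. x i * y i)"
    unfolding ideal_prod_def by blast
  have sums: "{u + v |u v. u \<in> sg_level gs 1 \<and> v \<in> sg_level gs n} \<subseteq> sg_level gs (Suc n)"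
    using sg_level_add[of _ gs 1 _ n] by auto
  have "x i * y i \<in> supported_on (sg_level gs (Suc n))" if "i < r" for i
    using mult_supported_on[of "x i" _ "y i"] xy that sg_max_ideal_subset_level_1
      supported_on_mono[OF sums] by blast
  then show "g \<in> supported_on (sg_level gs (Suc n))"
    unfolding g by (rule sum_supported_on)
qed

lemma level_Suc_subset_ideal_prod:
  assumes pos: "\<forall>g\<in>set gs. 0 < g"
  shows "(supported_on (sg_level gs (Suc n)) :: 'k::field fps set)
           \<subseteq> ideal_prod (sg_max_ideal (num_semigroup gs)) (supported_on (sg_level gs n))"
proof
  fix f :: "'k fps"
  assume f: "f \<in> supported_on (sg_level gs (Suc n))"
  define L where "L = length gs"
  define removable where "removable s j \<longleftrightarrow> j < L \<and> gs ! j \<le> s \<and> s - gs ! j \<in> sg_level gs n"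
    for s j
  define pick where "pick s = (LEAST j. removable s j)" for s
  have pick_removable: "removable s (pick s)" if "s \<in> sg_level gs (Suc n)" for s
    unfolding pick_def
    by (rule LeastI_ex) (use sg_level_Suc_remove_generator[OF that] in \<open>auto simp: removable_def L_def\<close>)
  \<comment> \<open>\<open>f = \<Sum>\<^sub>j t\<^bsup>g\<^sub>j\<^esup> y\<^sub>j\<close>, where \<open>y\<^sub>j\<close> collects the terms \<open>t\<^sup>s\<close> of \<open>f\<close> with \<open>pick s = j\<close>.\<close>
  define y where "y j = Abs_fps (\<lambda>u. if u + gs ! j \<in> sg_level gs (Suc n) \<and> pick (u + gs ! j) = j
                                      then f $ (u + gs ! j) else 0)" for j
  define x where "x j = (fps_X :: 'k fps) ^ (gs ! j)" for j
  have x: "x j \<in> sg_max_ideal (num_semigroup gs)" if "j < L" for j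
    using generator_in_num_semigroup[of j gs] pos that
    unfolding x_def L_def sg_max_ideal_def sg_ring_def by auto
  have y: "y j \<in> supported_on (sg_level gs n)" for j
    unfolding supported_on_def
  proof (intro CollectI allI impI)
    fix u assume "y j $ u \<noteq> 0"
    then have "u + gs ! j \<in> sg_level gs (Suc n)" "pick (u + gs ! j) = j"
      by (auto simp: y_def split: if_splits)
    from pick_removable[OF this(1)] this(2) show "u \<in> sg_level gs n"
      by (simp add: removable_def)
  qed
  have "(\<Sum>j<L. x j * y j) $ s = f $ s" for s
  proof -
    have "(x j * y j) $ s = (if j = pick s \<and> s \<in> sg_level gs (Suc n) then f $ s else 0)" for j
    proof (cases "gs ! j \<le> s")
      case True
      then have "s - gs ! j + gs ! j = s"
        by simp
      with True show ?thesis
        unfolding x_def y_def by (auto simp: fps_X_power_mult_nth)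
    next
      case False
      then have "\<not> (j = pick s \<and> s \<in> sg_level gs (Suc n))"
        using pick_removable[of s] unfolding removable_def by auto
      then show ?thesis
        using False unfolding x_def by (auto simp: fps_X_power_mult_nth)
    qed
    then have "(\<Sum>j<L. x j * y j) $ s = (if s \<in> sg_level gs (Suc n) then f $ s else 0)"
      using pick_removable[of s] by (simp add: fps_sum_nth removable_def)
    then show ?thesis
      using f unfolding supported_on_def by auto
  qed
  then have "f = (\<Sum>j<L. x j * y j)"
    by (simp add: fps_ext)
  then show "f \<in> ideal_prod (sg_max_ideal (num_semigroup gs)) (supported_on (sg_level gs n))"
    unfolding ideal_prod_def using x y
    by (intro CollectI exI[of _ L] exI[of _ x] exI[of _ y]) simp
qed

lemma max_ideal_pow_num_semigroup:
  assumes "\<forall>g\<in>set gs. 0 < g"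
  shows "max_ideal_pow (num_semigroup gs) n = (supported_on (sg_level gs n) :: 'k::field fps set)"
proof (induction n)
  case 0
  show ?case by (simp add: sg_ring_def supported_on_def sg_level_0)
next
  case (Suc n)
  then show ?case
    by simp (rule subset_antisym[OF ideal_prod_level_subset_level_Suc
          level_Suc_subset_ideal_prod[OF assms]])
qed

lemma quot_dim_supported_on:
  assumes "T' \<subseteq> T" "finite (T - T')"
  shows "quot_dim (supported_on T :: 'k::field fps set) (supported_on T') (card (T - T'))"
proof -
  define r where "r = card (T - T')"
  obtain e where "bij_betw e {..<r} (T - T')"
    using ex_bij_betw_nat_finite[OF assms(2)] unfolding r_def atLeast0LessThan by blast
  then have inj: "inj_on e {..<r}" and img: "e ` {..<r} = T - T'"
    unfolding bij_betw_def by auto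
  define f where "f i = (fps_X :: 'k fps) ^ e i" for i
  have coeff: "(\<Sum>i<r. fps_const (c i) * f i) $ s =
                 (if s \<in> T - T' then c (the_inv_into {..<r} e s) else 0)" for c s
  proof (cases "s \<in> T - T'")
    case True
    then obtain i0 where i0: "i0 < r" "s = e i0"
      using img by auto
    have "(\<Sum>i<r. fps_const (c i) * f i) $ s = (\<Sum>i<r. if i = i0 then c i else 0)"
      unfolding f_def fps_sum_nth using inj i0 by (intro sum.cong) (auto simp: inj_on_eq_iff)
    then show ?thesis
      using True i0 inj by (simp add: the_inv_into_f_f)
  next
    case False
    then show ?thesis
      using img unfolding f_def fps_sum_nth by (auto intro!: sum.neutral)
  qed
  show ?thesis
    unfolding quot_dim_def r_def[symmetric]
  proof (intro exI[of _ f] conjI allI impI ballI)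
    fix i assume "i < r"
    then show "f i \<in> supported_on T"
      using img unfolding f_def supported_on_def by auto
  next
    fix c i
    assume c: "(\<Sum>i<r. fps_const (c i) * f i) \<in> supported_on T'" and i: "i < r"
    have "e i \<in> T - T'"
      using img i by auto
    then have "(\<Sum>i<r. fps_const (c i) * f i) $ e i = 0"
      using c unfolding supported_on_def by blast
    then show "c i = 0"
      using \<open>e i \<in> T - T'\<close> i inj by (simp add: coeff the_inv_into_f_f)
  next
    fix g :: "'k fps"
    assume g: "g \<in> supported_on T"
    have "(g - (\<Sum>i<r. fps_const (g $ e i) * f i)) $ s = 0" if "s \<notin> T'" for s
    proof (cases "s \<in> T - T'")
      case True
      then obtain i where "i < r" "s = e i"
        using img by auto
      then show ?thesis
        using True inj by (simp add: coeff the_inv_into_f_f)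
    next
      case False
      then have "g $ s = 0"
        using g that unfolding supported_on_def by auto
      then show ?thesis
        using False by (auto simp: coeff)
    qed
    then have "g - (\<Sum>i<r. fps_const (g $ e i) * f i) \<in> supported_on T'"
      unfolding supported_on_def by blast
    then show "\<exists>c. g - (\<Sum>i<r. fps_const (c i) * f i) \<in> supported_on T'"
      by (rule exI[of _ "\<lambda>i. g $ e i"])
  qed
qed

section \<open>The greedy decomposition\<close>

text \<open>
  Decomposing \<open>i = 6 \<mu> + 3 \<nu> + \<xi>\<close> expresses \<open>i d\<close> through the \<open>d\<close>-parts \<open>6d, 3d, d\<close> of the
  generators \<open>4a + 6d, 3a + 3d, 2a + d\<close>, using \<open>\<mu> + \<nu> + \<xi>\<close> generators whose \<open>a\<close>-parts add up
  to \<open>greedy_weight i\<close>.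
\<close>

definition greedy_parts :: "nat \<Rightarrow> nat" where
  "greedy_parts i = mu_i i + nu_i i + xi_i i"

definition greedy_weight :: "nat \<Rightarrow> nat" where
  "greedy_weight i = 4 * mu_i i + 3 * nu_i i + 2 * xi_i i"

definition greedy_excess :: "nat \<Rightarrow> nat" where
  "greedy_excess i = 3 * mu_i i + 2 * nu_i i + xi_i i"

lemma greedy_decomposition: "i = 6 * mu_i i + 3 * nu_i i + xi_i i"
  and greedy_weight_div: "greedy_weight i + 3 * (i div 3) + 2 * (i div 6) = 2 * i"
  and greedy_excess_div: "greedy_excess i + i div 3 + i div 6 = i"
  and greedy_parts_le: "greedy_parts i \<le> (i + 1) div 6 + 2"
proof -
  define q r where "q = i div 6" and "r = i mod 6"
  have "i = 6 * q + r" "i div 3 = 2 * q + r div 3" "r < 6"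
    unfolding q_def r_def by simp_all presburger
  moreover have "r = 0 \<or> r = 1 \<or> r = 2 \<or> r = 3 \<or> r = 4 \<or> r = 5"
    using \<open>r < 6\<close> by arith
  ultimately show
    "i = 6 * mu_i i + 3 * nu_i i + xi_i i"
    "greedy_weight i + 3 * (i div 3) + 2 * (i div 6) = 2 * i"
    "greedy_excess i + i div 3 + i div 6 = i"
    "greedy_parts i \<le> (i + 1) div 6 + 2"
    unfolding greedy_parts_def greedy_weight_def greedy_excess_def mu_i_def nu_i_def xi_i_def
      q_def[symmetric] r_def[symmetric]
    by auto
qed

lemma greedy_weight_eq: "greedy_weight i = greedy_parts i + greedy_excess i"
  unfolding greedy_weight_def greedy_parts_def greedy_excess_def by simp

lemma greedy_weight_le: "greedy_weight (c1 + 3 * c2 + 6 * c3) \<le> 2 * c1 + 3 * c2 + 4 * c3"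
proof -
  define j where "j = c1 + 3 * c2 + 6 * c3"
  have "c3 \<le> j div 6" "c2 + 2 * c3 \<le> j div 3"
    unfolding j_def by (simp_all add: less_eq_div_iff_mult_less_eq)
  then have "greedy_weight j \<le> 2 * c1 + 3 * c2 + 4 * c3"
    using greedy_weight_div[of j] j_def by linarith
  then show ?thesis
    by (simp add: j_def)
qed

lemma greedy_excess_le: "greedy_excess (c1 + 3 * c2 + 6 * c3) \<le> c1 + 2 * c2 + 3 * c3"
proof -
  define j where "j = c1 + 3 * c2 + 6 * c3"
  have "c3 \<le> j div 6" "c2 + 2 * c3 \<le> j div 3"
    unfolding j_def by (simp_all add: less_eq_div_iff_mult_less_eq)
  then have "greedy_excess j \<le> c1 + 2 * c2 + 3 * c3"
    using greedy_excess_div[of j] j_def by linarith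
  then show ?thesis
    by (simp add: j_def)
qed

lemma greedy_weight_mono:
  assumes "i + 6 \<le> j"
  shows "greedy_weight i \<le> greedy_weight j"
proof -
  have "i mod 3 < 3" "i mod 6 < 6"
    by simp_all
  then show ?thesis
    using assms greedy_weight_div[of i] greedy_weight_div[of j]
      div_mult_mod_eq[of i 3] div_mult_mod_eq[of j 3] div_mult_mod_eq[of i 6] div_mult_mod_eq[of j 6]
    by linarith
qed

lemma greedy_excess_mono:
  assumes "i + 3 \<le> j"
  shows "greedy_excess i \<le> greedy_excess j"
proof -
  have "i mod 3 < 3" "i mod 6 < 6"
    by simp_all
  then show ?thesis
    using assms greedy_excess_div[of i] greedy_excess_div[of j]
      div_mult_mod_eq[of i 3] div_mult_mod_eq[of j 3] div_mult_mod_eq[of i 6] div_mult_mod_eq[of j 6]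
    by linarith
qed
section \<open>The semigroup generated by \<open>a, 2a + d, 3a + 3d, 4a + 6d\<close>\<close>

abbreviation sg_gens :: "nat \<Rightarrow> nat \<Rightarrow> nat list" where
  "sg_gens a d \<equiv> [a, 2 * a + d, 3 * a + 3 * d, 4 * a + 6 * d]"

lemma sum_sg_gens: "(\<Sum>j<length (sg_gens a d). f j * sg_gens a d ! j) =
   f 0 * a + f 1 * (2 * a + d) + f 2 * (3 * a + 3 * d) + f 3 * (4 * a + 6 * d)"
  by (simp add: lessThan_nat_numeral numeral_2_eq_2 numeral_3_eq_3 add.assoc)

lemma sg_level_sg_gens_iff:
  "s \<in> sg_level (sg_gens a d) n \<longleftrightarrow>
     (\<exists>c0 c1 c2 c3. s = c0 * a + c1 * (2 * a + d) + c2 * (3 * a + 3 * d) + c3 * (4 * a + 6 * d)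
                    \<and> n \<le> c0 + c1 + c2 + c3)"
proof
  assume "s \<in> sg_level (sg_gens a d) n"
  then obtain c where "s = (\<Sum>j<length (sg_gens a d). c j * sg_gens a d ! j)"
    and "n \<le> (\<Sum>j<length (sg_gens a d). c j)"
    unfolding sg_level_def by blast
  then show "\<exists>c0 c1 c2 c3. s = c0 * a + c1 * (2 * a + d) + c2 * (3 * a + 3 * d) + c3 * (4 * a + 6 * d)
               \<and> n \<le> c0 + c1 + c2 + c3"
    unfolding sum_sg_gens
    by (intro exI[of _ "c 0"] exI[of _ "c 1"] exI[of _ "c 2"] exI[of _ "c 3"])
      (simp add: lessThan_nat_numeral numeral_2_eq_2 numeral_3_eq_3 add.assoc)
next
  assume "\<exists>c0 c1 c2 c3. s = c0 * a + c1 * (2 * a + d) + c2 * (3 * a + 3 * d) + c3 * (4 * a + 6 * d)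
            \<and> n \<le> c0 + c1 + c2 + c3"
  then obtain c0 c1 c2 c3
    where "s = c0 * a + c1 * (2 * a + d) + c2 * (3 * a + 3 * d) + c3 * (4 * a + 6 * d)"
      and "n \<le> c0 + c1 + c2 + c3"
    by blast
  then show "s \<in> sg_level (sg_gens a d) n"
    unfolding sg_level_def sum_sg_gens
    by (intro CollectI exI[of _ "(!) [c0, c1, c2, c3]"])
      (simp add: lessThan_nat_numeral numeral_2_eq_2 numeral_3_eq_3 add.assoc)
qed

lemma normal_form_in_sg_level:
  "(greedy_weight i + q) * a + i * d \<in> sg_level (sg_gens a d) (q + greedy_parts i)"
proof -
  have "(greedy_weight i + q) * a + (6 * mu_i i + 3 * nu_i i + xi_i i) * d =
      q * a + xi_i i * (2 * a + d) + nu_i i * (3 * a + 3 * d) + mu_i i * (4 * a + 6 * d)"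
    unfolding greedy_weight_def by (simp add: algebra_simps)
  then show ?thesis
    unfolding sg_level_sg_gens_iff greedy_parts_def greedy_decomposition[of i, symmetric]
    by (intro exI[of _ q] exI[of _ "xi_i i"] exI[of _ "nu_i i"] exI[of _ "mu_i i"]) simp
qed

lemma sg_gens_normal_form:
  assumes "6 \<le> a"
    and s: "s = c0 * a + c1 * (2 * a + d) + c2 * (3 * a + 3 * d) + c3 * (4 * a + 6 * d)"
  shows "\<exists>i q. i < a \<and> s = (greedy_weight i + q) * a + i * d \<and> c0 + c1 + c2 + c3 \<le> q + greedy_parts i"
proof -
  define j where "j = c1 + 3 * c2 + 6 * c3"
  define i where "i = j mod a"
  define m where "m = j div a"
  have "i < a"
    using assms(1) unfolding i_def by simp
  have j: "j = i + m * a"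
    unfolding i_def m_def by simp
  have "i = j \<or> i + 6 \<le> j"
    using j assms(1) by (cases m) auto
  then have "greedy_weight i \<le> greedy_weight j \<and> greedy_excess i \<le> greedy_excess j"
    using greedy_weight_mono[of i j] greedy_excess_mono[of i j] by auto
  then have weight: "greedy_weight i \<le> c0 + 2 * c1 + 3 * c2 + 4 * c3"
    and excess: "greedy_excess i \<le> c1 + 2 * c2 + 3 * c3"
    using greedy_weight_le[of c1 c2 c3] greedy_excess_le[of c1 c2 c3] unfolding j_def by linarith+
  define q where "q = c0 + 2 * c1 + 3 * c2 + 4 * c3 + m * d - greedy_weight i"
  have q: "greedy_weight i + q = c0 + 2 * c1 + 3 * c2 + 4 * c3 + m * d"
    using weight unfolding q_def by simp
  have "s = (c0 + 2 * c1 + 3 * c2 + 4 * c3) * a + (i + m * a) * d"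
    unfolding s j[symmetric] j_def by (simp add: algebra_simps)
  also have "\<dots> = (greedy_weight i + q) * a + i * d"
    unfolding q by (simp add: algebra_simps)
  finally have "s = (greedy_weight i + q) * a + i * d" .
  moreover have "c0 + c1 + c2 + c3 \<le> q + greedy_parts i"
    using q excess greedy_weight_eq[of i] by linarith
  ultimately show ?thesis
    using \<open>i < a\<close> by blast
qed

lemma normal_form_unique:
  fixes a d :: nat
  assumes "i < a" "i' < a" "coprime a d" "x * a + i * d = y * a + i' * d"
  shows "i = i' \<and> x = y"
proof -
  have "(int i - int i') * int d = (int y - int x) * int a"
    using arg_cong[OF assms(4), of int] by (simp add: algebra_simps)
  then have "int a dvd (int i - int i') * int d"
    by simp
  then have dvd: "int a dvd int i - int i'"
    using assms(3) by (simp add: coprime_dvd_mult_left_iff)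
  have "i = i'"
  proof (rule ccontr)
    assume "i \<noteq> i'"
    then have "\<bar>int a\<bar> \<le> \<bar>int i - int i'\<bar>"
      using dvd_imp_le_int[OF _ dvd] by simp
    then show False
      using assms(1,2) by linarith
  qed
  then show ?thesis
    using assms(1,4) by simp
qed

lemma mem_sg_level_normal_form_iff:
  assumes "6 \<le> a" "coprime a d" "i < a"
  shows "(greedy_weight i + q) * a + i * d \<in> sg_level (sg_gens a d) n \<longleftrightarrow> n \<le> q + greedy_parts i"
proof
  assume "(greedy_weight i + q) * a + i * d \<in> sg_level (sg_gens a d) n"
  then obtain c0 c1 c2 c3
    where c: "(greedy_weight i + q) * a + i * d =
                c0 * a + c1 * (2 * a + d) + c2 * (3 * a + 3 * d) + c3 * (4 * a + 6 * d)"
      and n: "n \<le> c0 + c1 + c2 + c3"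
    unfolding sg_level_sg_gens_iff by blast
  obtain i' q' where "i' < a"
    and eq: "(greedy_weight i + q) * a + i * d = (greedy_weight i' + q') * a + i' * d"
    and le: "c0 + c1 + c2 + c3 \<le> q' + greedy_parts i'"
    using sg_gens_normal_form[OF assms(1) c] by blast
  have "i = i' \<and> greedy_weight i + q = greedy_weight i' + q'"
    using normal_form_unique[OF assms(3) \<open>i' < a\<close> assms(2) eq] .
  then show "n \<le> q + greedy_parts i"
    using n le by auto
next
  assume "n \<le> q + greedy_parts i"
  then show "(greedy_weight i + q) * a + i * d \<in> sg_level (sg_gens a d) n"
    using normal_form_in_sg_level sg_level_antimono by blast
qed

lemma sg_level_diff_sg_gens:
  assumes "6 \<le> a" "coprime a d"
  shows "sg_level (sg_gens a d) n - sg_level (sg_gens a d) (Suc n) =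
           (\<lambda>i. (greedy_weight i + (n - greedy_parts i)) * a + i * d) ` {i. i < a \<and> greedy_parts i \<le> n}"
    (is "_ = ?nf ` ?I")
proof (intro set_eqI iffI)
  fix s
  assume s: "s \<in> sg_level (sg_gens a d) n - sg_level (sg_gens a d) (Suc n)"
  then have "s \<in> sg_level (sg_gens a d) n"
    by blast
  then obtain c0 c1 c2 c3
    where "s = c0 * a + c1 * (2 * a + d) + c2 * (3 * a + 3 * d) + c3 * (4 * a + 6 * d)"
    unfolding sg_level_sg_gens_iff by blast
  then obtain i q where i: "i < a" and s_eq: "s = (greedy_weight i + q) * a + i * d"
    using sg_gens_normal_form[OF assms(1)] by blast
  have "n \<le> q + greedy_parts i" "\<not> Suc n \<le> q + greedy_parts i"
    using s mem_sg_level_normal_form_iff[OF assms i, where n = n]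
      mem_sg_level_normal_form_iff[OF assms i, where n = "Suc n"]
    unfolding s_eq by blast+
  then have "q = n - greedy_parts i" "greedy_parts i \<le> n"
    by linarith+
  then show "s \<in> ?nf ` ?I"
    using i unfolding s_eq by blast
next
  fix s
  assume "s \<in> ?nf ` ?I"
  then obtain i where i: "i < a" "greedy_parts i \<le> n" and s_eq: "s = ?nf i"
    by blast
  then have "n \<le> (n - greedy_parts i) + greedy_parts i" "\<not> Suc n \<le> (n - greedy_parts i) + greedy_parts i"
    by linarith+
  then show "s \<in> sg_level (sg_gens a d) n - sg_level (sg_gens a d) (Suc n)"
    using mem_sg_level_normal_form_iff[OF assms i(1), where q = "n - greedy_parts i"]
    unfolding s_eq by blast
qed

lemma card_greedy_parts_le:
  assumes "0 < a"
  shows "card {i. i < a \<and> greedy_parts i \<le> n} = (\<Sum>k\<le>n. t_coeff a k)"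
proof (induction n)
  case 0
  have "{i. i < a \<and> greedy_parts i \<le> 0} = {i. i \<le> a - 1 \<and> mu_i i + nu_i i + xi_i i = 0}"
    using assms unfolding greedy_parts_def by auto
  then show ?case
    unfolding t_coeff_def by simp
next
  case (Suc n)
  have "{i. i < a \<and> greedy_parts i \<le> Suc n} =
          {i. i < a \<and> greedy_parts i \<le> n} \<union> {i. i \<le> a - 1 \<and> mu_i i + nu_i i + xi_i i = Suc n}"
    using assms unfolding greedy_parts_def by auto
  then have "card {i. i < a \<and> greedy_parts i \<le> Suc n} =
               card {i. i < a \<and> greedy_parts i \<le> n} + t_coeff a (Suc n)"
    unfolding t_coeff_def by (simp add: card_Un_disjoint greedy_parts_def disjoint_iff)
  then show ?case
    using Suc.IH by simp
qed

lemma card_sg_level_diff_sg_gens: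
  assumes "6 \<le> a" "coprime a d"
  shows "card (sg_level (sg_gens a d) n - sg_level (sg_gens a d) (Suc n)) = (\<Sum>k\<le>n. t_coeff a k)"
proof -
  have inj: "inj_on (\<lambda>i. (greedy_weight i + (n - greedy_parts i)) * a + i * d)
                 {i. i < a \<and> greedy_parts i \<le> n}"
    using normal_form_unique[OF _ _ assms(2)] by (auto intro!: inj_onI)
  then show ?thesis
    unfolding sg_level_diff_sg_gens[OF assms] card_image[OF inj]
    using assms by (simp add: card_greedy_parts_le)
qed

lemma t_coeff_eq_0:
  assumes "a div 6 + 2 < k"
  shows "t_coeff a k = 0"
proof -
  have "greedy_parts i < k" if "i \<le> a - 1" for i
  proof -
    have "(i + 1) div 6 \<le> a div 6"
      using that by (cases "a = 0") (auto intro: div_le_mono)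
    then show ?thesis
      using greedy_parts_le[of i] assms by linarith
  qed
  then show ?thesis
    unfolding t_coeff_def greedy_parts_def by (auto simp: less_not_refl)
qed

section \<open>The Hilbert series\<close>

lemma fps_partial_sums_eq_div_1_minus_X:
  fixes t :: "nat \<Rightarrow> 'a::field"
  assumes "\<forall>k>K. t k = 0"
  shows "Abs_fps (\<lambda>n. \<Sum>k\<le>n. t k) = (\<Sum>k=0..K. fps_const (t k) * fps_X ^ k) / (1 - fps_X)"
proof -
  have poly: "(\<Sum>k=0..K. fps_const (t k) * fps_X ^ k) = Abs_fps t"
    using fps_poly_sum_fps_X[of K "Abs_fps t"] assms by simp
  have "Abs_fps (\<lambda>n. \<Sum>k\<le>n. t k) * (1 - fps_X) = Abs_fps t"
  proof (rule fps_ext)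
    fix n
    show "(Abs_fps (\<lambda>n. \<Sum>k\<le>n. t k) * (1 - fps_X)) $ n = Abs_fps t $ n"
      by (cases n) (simp_all add: algebra_simps fps_X_mult_nth)
  qed
  moreover have "(1 - fps_X :: 'a fps) $ 0 \<noteq> 0"
    by simp
  then have "(1 - fps_X :: 'a fps) \<noteq> 0"
    by auto
  ultimately show ?thesis
    unfolding poly by (metis nonzero_mult_div_cancel_right)
qed

theorem corollary6p9:
  fixes a d :: nat
  assumes "infinite (UNIV :: 'k::field set)"
    and "d > 0" and "a \<ge> 7" and "gcd a d = 1"
  defines "S \<equiv> num_semigroup [a, 2*a + d, 3*a + 3*d, 4*a + 6*d]"
  shows "\<exists>h :: nat \<Rightarrow> nat.
           (\<forall>n. quot_dim (max_ideal_pow S n :: 'k fps set) (max_ideal_pow S (Suc n)) (h n)) \<and>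
           Abs_fps (\<lambda>n. real (h n)) =
             (\<Sum>k=0..a div 6 + 2. of_nat (t_coeff a k) * fps_X ^ k) / (1 - fps_X)"
proof -
  have a: "6 \<le> a" and coprime: "coprime a d"
    using assms(3,4) by (simp_all add: coprime_iff_gcd_eq_1)
  have pos: "\<forall>g\<in>set (sg_gens a d). 0 < g"
    using a by auto
  define h where "h n = card (sg_level (sg_gens a d) n - sg_level (sg_gens a d) (Suc n))" for n
  have "quot_dim (max_ideal_pow S n :: 'k fps set) (max_ideal_pow S (Suc n)) (h n)" for n
    unfolding S_def max_ideal_pow_num_semigroup[OF pos] h_def
    by (rule quot_dim_supported_on) (simp_all add: sg_level_antimono sg_level_diff_sg_gens[OF a coprime])
  moreover have "Abs_fps (\<lambda>n. real (h n)) =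
      (\<Sum>k=0..a div 6 + 2. of_nat (t_coeff a k) * fps_X ^ k) / (1 - fps_X)"
    using fps_partial_sums_eq_div_1_minus_X[of "a div 6 + 2" "\<lambda>k. real (t_coeff a k)"] t_coeff_eq_0
    unfolding h_def card_sg_level_diff_sg_gens[OF a coprime] by (simp add: fps_of_nat)
  ultimately show ?thesis
    by blast
qed

end
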